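(* For an integer $b\ge2$ let $O_{12(b-2)+k}$, $k\in\{1,5,7\}$, denote respectively $Y(b;(2,1),(3,2),(4,3))$, $Y(b;(2,1),(3,1),(4,3))$, $Y(b;(2,1),(3,2),(4,1))$, and let $X$ be its canonical negative definite plumbed 4-manifold, with intersection form $Q_X$ on $H_2(X;\mathbb{Z})$. Then for every $n\ge1$, the orthogonal direct sum of $n$ copies of $Q_X$ does not embed (as a lattice, i.e. by a homomorphism preserving the pairing) into the standard negative definite lattice $(\mathbb{Z}^{N},\langle-1\rangle^{N})$ with $N=n\cdot\mathrm{rk}(Q_X)$.
   Context: $Y(b;(\alpha_1,\beta_1),\dots,(\alpha_r,\beta_r))$ with $\alpha_i>\beta_i>0$ coprime and $b-\sum\beta_i/\alpha_i>0$ is the boundary of its canonical negative definite plumbing: a central vertex of weight $-b$ and, for each $i$, a leg with weights $-a_i^1,\dots,-a_i^{s_i}$ where $\alpha_i/\beta_i=a_i^1-1/(a_i^2-\cdots-1/a_i^{s_i})$, $a_i^j\ge2$ (vertices are disk bundles over $S^2$ of the given Euler numbers, edges are plumbings). Concretely: for $k=1$ the legs are $(-2)$, $(-2,-2)$, $(-2,-2,-2)$; for $k=5$ they are $(-2)$, $(-3)$, $(-2,-2,-2)$; for $k=7$ they are $(-2)$, $(-2,-2)$, $(-4)$. $Q_X$ is the intersection form in the basis of spheres corresponding to vertices. $(\mathbb{Z}^N,\langle-1\rangle^N)$ is $\mathbb{Z}^N$ with $e_i\cdot e_j=-\delta_{ij}$. *)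

theory Defs
  imports Main
begin

text \<open>Hirzebruch--Jung continued fraction expansion:
  alpha/beta = a1 - 1/(a2 - ... - 1/as), all a_j >= 2 (for alpha > beta > 0 coprime).\<close>
function hj_expansion :: "nat \<Rightarrow> nat \<Rightarrow> nat list" where
  "hj_expansion \<alpha> \<beta> =
     (if \<beta> = 0 then []
      else (let a = (\<alpha> + \<beta> - 1) div \<beta> in a # hj_expansion \<beta> (a * \<beta> - \<alpha>)))"
  by pat_completeness auto
termination
proof (relation "measure snd")
  fix \<alpha> \<beta> :: nat and a
  assume "\<not> \<beta> = 0" and a: "a = (\<alpha> + \<beta> - 1) div \<beta>"
  have "a * \<beta> \<le> \<alpha> + \<beta> - 1" using a using div_times_less_eq_dividend[of "\<alpha> + \<beta> - 1" \<beta>] by (simp add: mult.commute)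
  then show "((\<beta>, a * \<beta> - \<alpha>), \<alpha>, \<beta>) \<in> measure snd"
    using \<open>\<not> \<beta> = 0\<close> by auto
qed auto

declare hj_expansion.simps[simp del]

text \<open>Vertex 0 is the central vertex
  (weight -b); the legs follow consecutively, leg i having weights
  -a_i^1,...,-a_i^{s_i} with a_i^1 adjacent to the central vertex.\<close>

definition seifert_legs :: "(nat \<times> nat) list \<Rightarrow> nat list list" where
  "seifert_legs sinv = map (\<lambda>(\<alpha>, \<beta>). hj_expansion \<alpha> \<beta>) sinv"

definition star_weights :: "nat \<Rightarrow> nat list list \<Rightarrow> int list" where
  "star_weights b legs = (- int b) # concat (map (map (\<lambda>a. - int a)) legs)"

definition leg_start :: "nat list list \<Rightarrow> nat \<Rightarrow> nat" where
  "leg_start legs i = 1 + sum_list (map length (take i legs))"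

definition star_edges :: "nat list list \<Rightarrow> (nat \<times> nat) set" where
  "star_edges legs =
     {(0, leg_start legs i) | i. i < length legs \<and> legs ! i \<noteq> []}
   \<union> {(leg_start legs i + j, leg_start legs i + j + 1) | i j.
        i < length legs \<and> j + 1 < length (legs ! i)}"

definition plumbing_form :: "int list \<Rightarrow> (nat \<times> nat) set \<Rightarrow> nat \<Rightarrow> nat \<Rightarrow> int" where
  "plumbing_form w E i j =
     (if i = j then w ! i else if (i, j) \<in> E \<or> (j, i) \<in> E then 1 else 0)"

definition plumbing_rank :: "nat \<Rightarrow> (nat \<times> nat) list \<Rightarrow> nat" where
  "plumbing_rank b sinv = length (star_weights b (seifert_legs sinv))"

definition plumbing_QX :: "nat \<Rightarrow> (nat \<times> nat) list \<Rightarrow> nat \<Rightarrow> nat \<Rightarrow> int" where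
  "plumbing_QX b sinv =
     plumbing_form (star_weights b (seifert_legs sinv)) (star_edges (seifert_legs sinv))"

definition O_invariants :: "nat \<Rightarrow> (nat \<times> nat) list" where
  "O_invariants k =
     (if k = 1 then [(2,1),(3,2),(4,3)]
      else if k = 5 then [(2,1),(3,1),(4,3)]
      else [(2,1),(3,2),(4,1)])"

definition orth_sum_copies :: "nat \<Rightarrow> nat \<Rightarrow> (nat \<Rightarrow> nat \<Rightarrow> int) \<Rightarrow> nat \<Rightarrow> nat \<Rightarrow> int" where
  "orth_sum_copies n r Q i j = (if i div r = j div r then Q (i mod r) (j mod r) else 0)"

text \<open>A lattice embedding of (Z^m, Q) into (Z^N, <-1>^N): a Z-linear map, given by
  the images A i = (A i 0, ..., A i (N-1)) of the basis vectors e_i (i < m),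
  preserving the pairing.\<close>
definition embeds_in_std_neg :: "nat \<Rightarrow> (nat \<Rightarrow> nat \<Rightarrow> int) \<Rightarrow> nat \<Rightarrow> bool" where
  "embeds_in_std_neg m Q N =
     (\<exists>A :: nat \<Rightarrow> nat \<Rightarrow> int. \<forall>i<m. \<forall>j<m. (\<Sum>l<N. - (A i l * A j l)) = Q i j)"

end

(*
  An embedding of n copies of Q_X into Z^N sends each (-2)-vertex to a root +-e_a +-e_c.
  Two orthogonal roots whose pairings with some third vertex differ in parity have disjoint
  supports; so for a suitable set S of (-2)-vertices the n|S| images use 2n|S| distinct
  coordinates.  For k = 1 this exceeds N = 7n.  For k = 5 these roots use every coordinate,
  and then the (-3)-vertex, orthogonal to all of them, would have even square by parity.
  For k = 7 the roots of the two (-2)-vertices next to the centre leave n coordinates free,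
  which the roots of the remaining (-2)-vertex must fill, one coordinate each.  Counting the
  squared coordinates of the image w of the (-4)-vertex over these two regions forces w to
  live on the first family with total weight 2, and pairing w with the sum of the images of
  the central vertices gives a parity contradiction.
*)
theory Submission
  imports Defs
begin

definition dot :: "nat \<Rightarrow> (nat \<Rightarrow> int) \<Rightarrow> (nat \<Rightarrow> int) \<Rightarrow> int" where
  "dot N u v = (\<Sum>l<N. u l * v l)"

lemma dot_self: "dot N u u = (\<Sum>l<N. (u l)^2)"
  by (simp add: dot_def power2_eq_square)

lemma dot_sum_left: "dot N (\<lambda>l. \<Sum>q\<in>Q. U q l) v = (\<Sum>q\<in>Q. dot N (U q) v)"
  unfolding dot_def by (simp add: sum_distrib_right sum.swap[of _ "{..<N}"])

lemma dot_parity: "even (dot N u v - (\<Sum>l<N. (u l)^2 * (v l)^2))"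
proof -
  have "dot N u v - (\<Sum>l<N. (u l)^2 * (v l)^2) = (\<Sum>l<N. u l * v l - (u l * v l)^2)"
    by (simp add: dot_def sum_subtractf power_mult_distrib)
  also have "even \<dots>"
    by (intro dvd_sum) (simp add: power2_eq_square)
  finally show ?thesis .
qed

lemma sum_lessThan_two_points:
  fixes f :: "nat \<Rightarrow> 'a::comm_monoid_add"
  assumes "a < N" "c < N" "a \<noteq> c" "\<forall>l<N. l \<noteq> a \<longrightarrow> l \<noteq> c \<longrightarrow> f l = 0"
  shows "(\<Sum>l<N. f l) = f a + f c"
proof -
  have "(\<Sum>l<N. f l) = (\<Sum>l\<in>{a, c}. f l)"
    using assms by (intro sum.mono_neutral_right) auto
  then show ?thesis using assms(3) by simp
qed

lemma nonneg_sum_lessThan_eq_0: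
  fixes f :: "nat \<Rightarrow> 'a::ordered_comm_monoid_add"
  assumes "(\<Sum>l<N. f l) = 0" "\<forall>l<N. 0 \<le> f l"
  shows "\<forall>l<N. f l = 0"
  using assms sum_nonneg_eq_0_iff[of "{..<N}" f] by simp

lemma root_entry:
  assumes "dot N u u = 2" "l < N"
  shows "u l \<in> {-1, 0, 1}"
proof -
  have "(u l)^2 \<le> (\<Sum>l<N. (u l)^2)"
    using assms(2) by (intro member_le_sum) auto
  then have "\<bar>u l\<bar>^2 < 2^2"
    using assms(1) by (simp add: dot_self)
  then have "\<bar>u l\<bar> < 2"
    by (rule power_less_imp_less_base) simp
  then show ?thesis by auto
qed

lemma root_entry_sq:
  assumes "dot N u u = 2" "l < N"
  shows "(u l)^2 = of_bool (u l \<noteq> 0)"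
  using root_entry[OF assms] by auto

lemma root_support:
  assumes "dot N u u = 2"
  obtains a c where "a < N" "c < N" "a \<noteq> c" "(u a)^2 = 1" "(u c)^2 = 1"
    "\<forall>l<N. l \<noteq> a \<longrightarrow> l \<noteq> c \<longrightarrow> u l = 0"
proof -
  have "2 = (\<Sum>l<N. (u l)^2)"
    using assms by (simp add: dot_self)
  also have "\<dots> = (\<Sum>l<N. of_bool (u l \<noteq> 0))"
    using root_entry_sq[OF assms] by simp
  finally have "card {l\<in>{..<N}. u l \<noteq> 0} = 2"
    by (simp add: Int_def)
  then obtain a c where ac: "{l\<in>{..<N}. u l \<noteq> 0} = {a, c}" "a \<noteq> c"
    by (auto simp: card_2_iff)
  then have "a < N" "c < N" "u a \<noteq> 0" "u c \<noteq> 0" by blast+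
  then have "(u a)^2 = 1" "(u c)^2 = 1"
    using root_entry_sq[OF assms] by simp_all
  moreover have "\<forall>l<N. l \<noteq> a \<longrightarrow> l \<noteq> c \<longrightarrow> u l = 0" using ac by blast
  ultimately show ?thesis
    using that ac(2) \<open>a < N\<close> \<open>c < N\<close> by blast
qed

lemma orthogonal_roots_same_support:
  assumes u: "dot N u u = 2" and v: "dot N v v = 2" and uv: "dot N u v = 0"
    and shared: "l < N" "u l * v l \<noteq> 0"
  shows "\<forall>l<N. u l = 0 \<longleftrightarrow> v l = 0"
proof -
  obtain a c where ac: "a < N" "c < N" "a \<noteq> c" "(u a)^2 = 1" "(u c)^2 = 1"
    "\<forall>l<N. l \<noteq> a \<longrightarrow> l \<noteq> c \<longrightarrow> u l = 0"
    by (rule root_support[OF u])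
  have "u a * v a + u c * v c = 0"
    using uv ac sum_lessThan_two_points[of a N c "\<lambda>l. u l * v l"] by (simp add: dot_def)
  moreover have "v a \<noteq> 0 \<or> v c \<noteq> 0"
    using ac shared by auto
  moreover have "u a \<in> {-1, 1}" "u c \<in> {-1, 1}" "v a \<in> {-1, 0, 1}" "v c \<in> {-1, 0, 1}"
    using ac root_entry[OF u] root_entry[OF v] by (auto simp: power2_eq_1_iff)
  ultimately have "(v a)^2 = 1" "(v c)^2 = 1" by auto
  then have "(\<Sum>l\<in>{..<N} - {a, c}. (v l)^2) = 0"
    using v ac sum.subset_diff[of "{a, c}" "{..<N}" "\<lambda>l. (v l)^2"] by (simp add: dot_self)
  then have "\<forall>l\<in>{..<N} - {a, c}. v l = 0"
    by (subst (asm) sum_nonneg_eq_0_iff) auto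
  then show ?thesis
    using ac \<open>(v a)^2 = 1\<close> \<open>(v c)^2 = 1\<close> by auto
qed

lemma orthogonal_roots_disjoint:
  assumes u: "dot N u u = 2" and v: "dot N v v = 2" and uv: "dot N u v = 0"
    and odd: "odd (dot N c u - dot N c v)"
  shows "\<forall>l<N. u l * v l = 0"
proof (rule ccontr)
  assume "\<not> (\<forall>l<N. u l * v l = 0)"
  then have same: "\<forall>l<N. u l = 0 \<longleftrightarrow> v l = 0"
    using orthogonal_roots_same_support[OF u v uv] by blast
  have "even (u l - v l)" if "l < N" for l
    using root_entry[OF u that] root_entry[OF v that] same that by auto
  then have "even (\<Sum>l<N. c l * (u l - v l))"
    by (intro dvd_sum) simp
  moreover have "dot N c u - dot N c v = (\<Sum>l<N. c l * (u l - v l))"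
    by (simp add: dot_def sum_subtractf[symmetric] algebra_simps)
  ultimately show False using odd by simp
qed

definition root_weight :: "nat \<Rightarrow> (nat \<Rightarrow> int) \<Rightarrow> (nat \<Rightarrow> int) \<Rightarrow> int" where
  "root_weight N w r = (\<Sum>l<N. (w l)^2 * (r l)^2) div 2"

text \<open>A vector orthogonal to the root \<open>\<pm>e\<^sub>a \<pm> e\<^sub>c\<close> has \<open>w\<^sub>a\<^sup>2 = w\<^sub>c\<^sup>2\<close>;
  \<^const>\<open>root_weight\<close> is this common value.\<close>
lemma root_weight:
  assumes r: "dot N r r = 2" and wr: "dot N w r = 0"
  shows "\<forall>l<N. (w l)^2 * (r l)^2 = root_weight N w r * (r l)^2"
    and "0 \<le> root_weight N w r"
proof -
  obtain a c where ac: "a < N" "c < N" "a \<noteq> c" "(r a)^2 = 1" "(r c)^2 = 1"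
    "\<forall>l<N. l \<noteq> a \<longrightarrow> l \<noteq> c \<longrightarrow> r l = 0"
    by (rule root_support[OF r])
  have "w a * r a = - (w c * r c)"
    using wr ac sum_lessThan_two_points[of a N c "\<lambda>l. w l * r l"] by (simp add: dot_def)
  then have "(w a)^2 * (r a)^2 = (w c)^2 * (r c)^2"
    by (simp add: power_mult_distrib[symmetric])
  then have wac: "(w a)^2 = (w c)^2"
    using ac by simp
  have "(\<Sum>l<N. (w l)^2 * (r l)^2) = (w a)^2 * (r a)^2 + (w c)^2 * (r c)^2"
    using ac by (intro sum_lessThan_two_points) auto
  then have weight: "root_weight N w r = (w a)^2"
    using ac wac by (simp add: root_weight_def)
  show "\<forall>l<N. (w l)^2 * (r l)^2 = root_weight N w r * (r l)^2"
    using ac weight wac by (metis mult_zero_right power_zero_numeral)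
  show "0 \<le> root_weight N w r"
    using weight by simp
qed

lemma root_weight_eq_if_overlap:
  assumes r: "dot N r r = 2" "dot N w r = 0" and s: "dot N s s = 2" "dot N w s = 0"
    and "dot N r s \<noteq> 0"
  shows "root_weight N w r = root_weight N w s"
proof -
  obtain l where l: "l < N" "r l * s l \<noteq> 0"
    using \<open>dot N r s \<noteq> 0\<close> unfolding dot_def by (meson lessThan_iff sum.neutral)
  then have "(r l)^2 = 1" "(s l)^2 = 1"
    using root_entry_sq[OF r(1)] root_entry_sq[OF s(1)] by auto
  then show ?thesis
    using root_weight(1)[OF r] root_weight(1)[OF s] l(1) by force
qed

definition disjoint_roots :: "nat \<Rightarrow> 'i set \<Rightarrow> ('i \<Rightarrow> nat \<Rightarrow> int) \<Rightarrow> bool" where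
  "disjoint_roots N I R \<longleftrightarrow> finite I \<and> (\<forall>i\<in>I. dot N (R i) (R i) = 2) \<and>
     (\<forall>i\<in>I. \<forall>j\<in>I. i \<noteq> j \<longrightarrow> (\<forall>l<N. R i l * R j l = 0))"

definition cover :: "'i set \<Rightarrow> ('i \<Rightarrow> nat \<Rightarrow> int) \<Rightarrow> nat \<Rightarrow> int" where
  "cover I R l = (\<Sum>i\<in>I. (R i l)^2)"

lemma disjoint_roots_norm: "disjoint_roots N I R \<Longrightarrow> i \<in> I \<Longrightarrow> dot N (R i) (R i) = 2"
  by (simp add: disjoint_roots_def)

lemma cover_nonneg: "0 \<le> cover I R l"
  by (simp add: cover_def sum_nonneg)

lemma cover_le_1:
  assumes I: "disjoint_roots N I R" and l: "l < N"
  shows "cover I R l \<le> 1"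
proof (cases "\<exists>i\<in>I. R i l \<noteq> 0")
  case True
  then obtain i where i: "i \<in> I" "R i l \<noteq> 0" by blast
  have "\<forall>j\<in>I - {i}. (R j l)^2 = 0"
    using I i l by (auto simp: disjoint_roots_def)
  then have "cover I R l = (R i l)^2"
    using I i by (simp add: cover_def disjoint_roots_def sum.remove)
  then show ?thesis
    using root_entry_sq[of N "R i" l] I i l by (simp add: disjoint_roots_def)
next
  case False
  then show ?thesis by (simp add: cover_def)
qed

lemma sum_cover:
  assumes "disjoint_roots N I R"
  shows "(\<Sum>l<N. cover I R l) = 2 * int (card I)"
proof -
  have "(\<Sum>l<N. cover I R l) = (\<Sum>i\<in>I. dot N (R i) (R i))"
    by (simp add: cover_def dot_self sum.swap[of _ "{..<N}"])
  also have "\<dots> = (\<Sum>i\<in>I. 2)"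
    using assms by (simp add: disjoint_roots_def)
  finally show ?thesis by simp
qed

lemma card_disjoint_roots_le:
  assumes "disjoint_roots N I R"
  shows "2 * card I \<le> N"
proof -
  have "2 * int (card I) \<le> (\<Sum>l<N. 1)"
    unfolding sum_cover[OF assms, symmetric] using cover_le_1[OF assms] by (intro sum_mono) simp
  then show ?thesis by simp
qed

lemma sum_uncovered:
  assumes "disjoint_roots N I R"
  shows "(\<Sum>l<N. 1 - cover I R l) = int N - 2 * int (card I)"
  using sum_cover[OF assms] by (simp add: sum_subtractf)

lemma sum_dot_family_parity:
  assumes "finite I"
  shows "even ((\<Sum>i\<in>I. dot N u (R i)) - (\<Sum>l<N. (u l)^2 * cover I R l))"
proof -
  have "(\<Sum>l<N. (u l)^2 * cover I R l) = (\<Sum>i\<in>I. \<Sum>l<N. (u l)^2 * (R i l)^2)"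
    by (simp add: cover_def sum_distrib_left sum.swap[of _ "{..<N}"])
  then have "(\<Sum>i\<in>I. dot N u (R i)) - (\<Sum>l<N. (u l)^2 * cover I R l)
      = (\<Sum>i\<in>I. dot N u (R i) - (\<Sum>l<N. (u l)^2 * (R i l)^2))"
    by (simp add: sum_subtractf)
  also have "even \<dots>"
    by (intro dvd_sum dot_parity)
  finally show ?thesis .
qed

lemma weighted_sum_cover:
  assumes I: "disjoint_roots N I R" and w: "\<forall>i\<in>I. dot N w (R i) = 0"
  shows "(\<Sum>l<N. f l * (w l)^2 * cover I R l)
    = (\<Sum>i\<in>I. root_weight N w (R i) * (\<Sum>l<N. f l * (R i l)^2))"
proof -
  have "(\<Sum>l<N. f l * (w l)^2 * cover I R l) = (\<Sum>i\<in>I. \<Sum>l<N. f l * ((w l)^2 * (R i l)^2))"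
    by (simp add: cover_def sum_distrib_left sum.swap[of _ "{..<N}"] mult.assoc)
  also have "\<dots> = (\<Sum>i\<in>I. \<Sum>l<N. root_weight N w (R i) * (f l * (R i l)^2))"
    using root_weight(1) I w by (intro sum.cong refl) (auto simp: disjoint_roots_def)
  finally show ?thesis
    by (simp add: sum_distrib_left)
qed

text \<open>By parity \<open>u\<close> meets the support of the family in an odd number, hence exactly one, of
  its two coordinates.\<close>
lemma root_meets_uncovered_once:
  assumes I: "disjoint_roots N I R" and u: "dot N u u = 2"
    and odd: "odd (\<Sum>i\<in>I. dot N u (R i))"
  shows "(\<Sum>l<N. (1 - cover I R l) * (u l)^2) = 1"
proof -
  let ?s = "\<Sum>l<N. (u l)^2 * cover I R l"
  have "odd ?s"
    using sum_dot_family_parity[of I N u R] I odd by (simp add: disjoint_roots_def)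
  moreover have "0 \<le> ?s"
    by (intro sum_nonneg mult_nonneg_nonneg cover_nonneg) simp
  moreover have "?s \<le> (\<Sum>l<N. (u l)^2)"
    using cover_le_1[OF I] by (intro sum_mono) (simp add: mult_left_le)
  moreover have norm: "(\<Sum>l<N. (u l)^2) = 2"
    using u by (simp add: dot_self)
  ultimately have "?s = 1" by presburger
  then show ?thesis
    using norm by (simp add: algebra_simps sum_subtractf)
qed

lemma uncovered_covered_by:
  assumes I: "disjoint_roots N I R" and J: "disjoint_roots N J T"
    and once: "\<forall>j\<in>J. (\<Sum>l<N. (1 - cover I R l) * (T j l)^2) = 1"
    and N: "N = 2 * card I + card J"
  shows "\<forall>l<N. (1 - cover I R l) * (1 - cover J T l) = 0"
proof -
  have "(\<Sum>l<N. (1 - cover I R l) * cover J T l) = (\<Sum>j\<in>J. \<Sum>l<N. (1 - cover I R l) * (T j l)^2)"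
    by (simp add: cover_def sum_distrib_left sum.swap[of _ "{..<N}"])
  also have "\<dots> = int (card J)"
    using once by simp
  finally have covered: "(\<Sum>l<N. (1 - cover I R l) * cover J T l) = int (card J)" .
  have "(\<Sum>l<N. (1 - cover I R l) * (1 - cover J T l))
      = (\<Sum>l<N. 1 - cover I R l) - (\<Sum>l<N. (1 - cover I R l) * cover J T l)"
    by (simp add: sum_subtractf[symmetric] algebra_simps)
  then have "(\<Sum>l<N. (1 - cover I R l) * (1 - cover J T l)) = 0"
    using covered sum_uncovered[OF I] N by linarith
  moreover have "\<forall>l<N. 0 \<le> (1 - cover I R l) * (1 - cover J T l)"
    using cover_le_1[OF I] cover_le_1[OF J] by simp
  ultimately show ?thesis
    by (rule nonneg_sum_lessThan_eq_0)
qed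

definition realizes_copies ::
    "nat \<Rightarrow> nat \<Rightarrow> nat \<Rightarrow> (nat \<Rightarrow> nat \<Rightarrow> int) \<Rightarrow> (nat \<Rightarrow> nat \<Rightarrow> nat \<Rightarrow> int) \<Rightarrow> bool" where
  "realizes_copies N n r g V \<longleftrightarrow> (\<forall>q<n. \<forall>q'<n. \<forall>v<r. \<forall>v'<r.
     dot N (V q v) (V q' v') = (if q = q' then g v v' else 0))"

text \<open>The parity conditions make the images of these vertices, in all copies, roots with
  pairwise disjoint supports.\<close>
definition separated_roots :: "nat \<Rightarrow> (nat \<Rightarrow> nat \<Rightarrow> int) \<Rightarrow> nat set \<Rightarrow> bool" where
  "separated_roots r g S \<longleftrightarrow> S \<subseteq> {..<r} \<and> (\<forall>v\<in>S. g v v = 2 \<and> (\<exists>w<r. odd (g w v))) \<and>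
     (\<forall>v\<in>S. \<forall>v'\<in>S. v \<noteq> v' \<longrightarrow> g v v' = 0 \<and> (\<exists>w<r. odd (g w v - g w v')))"

lemma embedding_realizes_copies:
  assumes "embeds_in_std_neg (n * r) (orth_sum_copies n r Q) N"
  obtains V where "realizes_copies N n r (\<lambda>v v'. - Q v v') V"
proof -
  obtain A where A: "\<forall>i<n * r. \<forall>j<n * r. (\<Sum>l<N. - (A i l * A j l)) = orth_sum_copies n r Q i j"
    using assms unfolding embeds_in_std_neg_def by blast
  have index: "q * r + v < n * r" if "q < n" "v < r" for q v
  proof -
    have "q * r + v < (q + 1) * r" using that by simp
    also have "\<dots> \<le> n * r" using that by (intro mult_right_mono) auto
    finally show ?thesis .
  qed
  have "realizes_copies N n r (\<lambda>v v'. - Q v v') (\<lambda>q v. A (q * r + v))"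
    unfolding realizes_copies_def
  proof (intro allI impI)
    fix q q' v v' assume qv: "q < n" "q' < n" "v < r" "v' < r"
    then have "(\<Sum>l<N. - (A (q * r + v) l * A (q' * r + v') l))
        = orth_sum_copies n r Q (q * r + v) (q' * r + v')"
      using A index by blast
    moreover have "(q * r + v) mod r = v" "(q' * r + v') mod r = v'"
      using qv by simp_all
    ultimately show "dot N (A (q * r + v)) (A (q' * r + v')) = (if q = q' then - Q v v' else 0)"
      using qv by (auto simp: dot_def orth_sum_copies_def sum_negf minus_equation_iff)
  qed
  then show ?thesis by (rule that)
qed

lemma realizes_copies_disjoint_roots:
  assumes V: "realizes_copies N n r g V" and S: "separated_roots r g S"
  shows "disjoint_roots N ({..<n} \<times> S) (case_prod V)"
  unfolding disjoint_roots_def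
proof (intro conjI ballI impI)
  have Sr: "S \<subseteq> {..<r}" using S by (simp add: separated_roots_def)
  then show "finite ({..<n} \<times> S)" by (auto intro: finite_subset)
  show "dot N (case_prod V i) (case_prod V i) = 2" if "i \<in> {..<n} \<times> S" for i
    using that V S Sr by (auto simp: realizes_copies_def separated_roots_def)
  fix i j assume i: "i \<in> {..<n} \<times> S" and j: "j \<in> {..<n} \<times> S" and "i \<noteq> j"
  obtain q v q' v' where ij: "i = (q, v)" "j = (q', v')" by fastforce
  have qv: "q < n" "q' < n" "v < r" "v' < r" "v \<in> S" "v' \<in> S"
    using i j Sr ij by auto
  obtain w where w: "w < r" "odd (dot N (V q w) (V q v) - dot N (V q w) (V q' v'))"
    and orth: "dot N (V q v) (V q' v') = 0"
  proof (cases "q = q'")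
    case True
    then have "v \<noteq> v'" using \<open>i \<noteq> j\<close> ij by simp
    then obtain w where "w < r" "odd (g w v - g w v')" "g v v' = 0"
      using S qv unfolding separated_roots_def by blast
    then show ?thesis
      using that V qv True by (simp add: realizes_copies_def)
  next
    case False
    obtain w where "w < r" "odd (g w v)"
      using S qv unfolding separated_roots_def by blast
    then show ?thesis
      using that V qv False by (simp add: realizes_copies_def)
  qed
  have "dot N (V q v) (V q v) = 2" "dot N (V q' v') (V q' v') = 2"
    using V S qv by (auto simp: realizes_copies_def separated_roots_def)
  from orthogonal_roots_disjoint[OF this orth w(2)]
  show "\<forall>l<N. case_prod V i l * case_prod V j l = 0"
    using ij by simp
qed

lemma separated_roots_dim:
  assumes "realizes_copies N n r g V" and S: "separated_roots r g S"
  shows "2 * n * card S \<le> N"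
proof -
  have "finite S"
    using S by (auto simp: separated_roots_def intro: finite_subset)
  then show ?thesis
    using card_disjoint_roots_le[OF realizes_copies_disjoint_roots[OF assms]]
    by (simp add: card_cartesian_product mult.assoc)
qed

text \<open>If the copies of \<open>S\<close> fill all of \<open>\<int>\<^sup>N\<close>, each coordinate lies in the support of exactly
  one of them; a vertex orthogonal to all of them then has even norm by parity.\<close>
lemma separated_roots_dim_strict:
  assumes V: "realizes_copies N n r g V" and S: "separated_roots r g S"
    and y: "y < r" "odd (g y y)" "\<forall>v\<in>S. g y v = 0" and n: "0 < n"
  shows "2 * n * card S < N"
proof (rule ccontr)
  let ?I = "{..<n} \<times> S" and ?R = "case_prod V"
  assume "\<not> 2 * n * card S < N"
  then have N: "N \<le> 2 * card ?I"
    by (simp add: card_cartesian_product)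
  have I: "disjoint_roots N ?I ?R"
    by (rule realizes_copies_disjoint_roots[OF V S])
  have "(\<Sum>l<N. 1 - cover ?I ?R l) = 0"
    using sum_uncovered[OF I] N card_disjoint_roots_le[OF I] by simp
  moreover have "\<forall>l<N. 0 \<le> 1 - cover ?I ?R l"
    using cover_le_1[OF I] by simp
  ultimately have full: "\<forall>l<N. cover ?I ?R l = 1"
    using nonneg_sum_lessThan_eq_0 by fastforce
  have Sr: "S \<subseteq> {..<r}" using S by (simp add: separated_roots_def)
  have "(\<Sum>i\<in>?I. dot N (V 0 y) (?R i)) = 0"
    using V y n Sr by (intro sum.neutral) (auto simp: realizes_copies_def)
  moreover have "(\<Sum>l<N. (V 0 y l)^2 * cover ?I ?R l) = g y y"
    using full V y n by (simp add: dot_self[symmetric] realizes_copies_def)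
  moreover have "finite ?I" using I by (simp add: disjoint_roots_def)
  ultimately show False
    using sum_dot_family_parity[of ?I N "V 0 y" ?R] y(2) by simp
qed

lemma star_edges_list:
  "star_edges legs = set
     (map (\<lambda>i. (0, leg_start legs i)) (filter (\<lambda>i. legs ! i \<noteq> []) [0..<length legs])
      @ concat (map (\<lambda>i. map (\<lambda>j. (leg_start legs i + j, leg_start legs i + j + 1))
                           [0..<length (legs ! i) - 1]) [0..<length legs]))"
  unfolding star_edges_def by fastforce

lemma seifert_legs_O:
  "seifert_legs (O_invariants 1) = [[2], [2, 2], [2, 2, 2]]"
  "seifert_legs (O_invariants 5) = [[2], [3], [2, 2, 2]]"
  "seifert_legs (O_invariants 7) = [[2], [2, 2], [4]]"
  by (simp_all add: seifert_legs_def O_invariants_def hj_expansion.simps)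

lemma plumbing_O1:
  "plumbing_rank b (O_invariants 1) = 7"
  "plumbing_QX b (O_invariants 1) = plumbing_form (star_weights b [[2], [2, 2], [2, 2, 2]])
     {(0, 1), (0, 2), (0, 4), (2, 3), (4, 5), (5, 6)}"
  unfolding plumbing_rank_def plumbing_QX_def seifert_legs_O
  by (simp_all add: star_weights_def star_edges_list leg_start_def upt_rec numeral_eq_Suc)

lemma plumbing_O5:
  "plumbing_rank b (O_invariants 5) = 6"
  "plumbing_QX b (O_invariants 5) = plumbing_form (star_weights b [[2], [3], [2, 2, 2]])
     {(0, 1), (0, 2), (0, 3), (3, 4), (4, 5)}"
  unfolding plumbing_rank_def plumbing_QX_def seifert_legs_O
  by (simp_all add: star_weights_def star_edges_list leg_start_def upt_rec numeral_eq_Suc)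

lemma plumbing_O7:
  "plumbing_rank b (O_invariants 7) = 5"
  "plumbing_QX b (O_invariants 7) = plumbing_form (star_weights b [[2], [2, 2], [4]])
     {(0, 1), (0, 2), (0, 4), (2, 3)}"
  unfolding plumbing_rank_def plumbing_QX_def seifert_legs_O
  by (simp_all add: star_weights_def star_edges_list leg_start_def upt_rec numeral_eq_Suc)

lemma O1_realization_dim:
  assumes "realizes_copies N n 7 (\<lambda>v v'. - plumbing_QX b (O_invariants 1) v v') V"
  shows "8 * n \<le> N"
proof -
  have "separated_roots 7 (\<lambda>v v'. - plumbing_QX b (O_invariants 1) v v') {1, 2, 4, 6}"
    unfolding separated_roots_def plumbing_O1
    by (simp add: plumbing_form_def star_weights_def Ex_less_Suc numeral_eq_Suc)
  from separated_roots_dim[OF assms this] show ?thesis by simp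
qed

lemma O5_realization_dim:
  assumes "realizes_copies N n 6 (\<lambda>v v'. - plumbing_QX b (O_invariants 5) v v') V" "0 < n"
  shows "6 * n < N"
proof -
  have "separated_roots 6 (\<lambda>v v'. - plumbing_QX b (O_invariants 5) v v') {1, 3, 5}"
    unfolding separated_roots_def plumbing_O5
    by (simp add: plumbing_form_def star_weights_def Ex_less_Suc numeral_eq_Suc)
  moreover have "odd (- plumbing_QX b (O_invariants 5) 2 2)"
    "\<forall>v\<in>{1, 3, 5}. - plumbing_QX b (O_invariants 5) 2 v = 0"
    unfolding plumbing_O5 by (simp_all add: plumbing_form_def star_weights_def)
  ultimately show ?thesis
    using separated_roots_dim_strict[OF assms(1), of "{1, 3, 5}" 2] assms(2) by simp
qed

locale O7_realization =
  fixes N n b :: nat and V :: "nat \<Rightarrow> nat \<Rightarrow> nat \<Rightarrow> int"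
  assumes realizes: "realizes_copies N n 5 (\<lambda>v v'. - plumbing_QX b (O_invariants 7) v v') V"
    and dim: "N = n * 5" and nonempty: "0 < n"
begin

abbreviation g :: "nat \<Rightarrow> nat \<Rightarrow> int" where
  "g v v' \<equiv> - plumbing_QX b (O_invariants 7) v v'"

abbreviation inner :: "(nat \<times> nat) set" where
  "inner \<equiv> {..<n} \<times> {1, 2}"

abbreviation outer :: "(nat \<times> nat) set" where
  "outer \<equiv> {..<n} \<times> {3}"

abbreviation w :: "nat \<Rightarrow> int" where
  "w \<equiv> V 0 4"

lemma gram: "q < n \<Longrightarrow> q' < n \<Longrightarrow> v < 5 \<Longrightarrow> v' < 5 \<Longrightarrow>
    dot N (V q v) (V q' v') = (if q = q' then g v v' else 0)"
  using realizes by (simp add: realizes_copies_def)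

lemma gram_entries:
  "g 0 1 = -1" "g 0 2 = -1" "g 0 4 = -1" "g 2 2 = 2" "g 2 3 = -1"
  "g 3 1 = 0" "g 3 2 = -1" "g 3 3 = 2" "g 4 1 = 0" "g 4 2 = 0" "g 4 3 = 0" "g 4 4 = 4"
  unfolding plumbing_O7 by (simp_all add: plumbing_form_def star_weights_def)

lemma inner_disjoint: "disjoint_roots N inner (case_prod V)"
proof -
  have "separated_roots 5 g {1, 2}"
    unfolding separated_roots_def plumbing_O7
    by (simp add: plumbing_form_def star_weights_def Ex_less_Suc numeral_eq_Suc)
  then show ?thesis by (rule realizes_copies_disjoint_roots[OF realizes])
qed

lemma outer_disjoint: "disjoint_roots N outer (case_prod V)"
proof -
  have "separated_roots 5 g {3}"
    unfolding separated_roots_def plumbing_O7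
    by (simp add: plumbing_form_def star_weights_def Ex_less_Suc numeral_eq_Suc)
  then show ?thesis by (rule realizes_copies_disjoint_roots[OF realizes])
qed

lemma sum_inner: "(\<Sum>i\<in>inner. f i) = (\<Sum>q<n. f (q, 1) + f (q, 2))"
  by (simp add: sum.cartesian_product')

lemma sum_outer: "(\<Sum>j\<in>outer. f j) = (\<Sum>q<n. f (q, 3))"
  by (simp add: sum.cartesian_product')

lemma outer_meets_uncovered_once:
  "\<forall>j\<in>outer. (\<Sum>l<N. (1 - cover inner (case_prod V) l) * (case_prod V j l)^2) = 1"
proof
  fix j assume "j \<in> outer"
  then obtain p where j: "j = (p, 3)" "p < n" by blast
  have "(\<Sum>i\<in>inner. dot N (V p 3) (case_prod V i)) = (\<Sum>q<n. if q = p then -1 else 0)"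
    unfolding sum_inner using gram j(2) gram_entries by (intro sum.cong) auto
  also have "\<dots> = -1"
    using j(2) by simp
  finally have "odd (\<Sum>i\<in>inner. dot N (case_prod V j) (case_prod V i))"
    using j(1) by simp
  then show "(\<Sum>l<N. (1 - cover inner (case_prod V) l) * (case_prod V j l)^2) = 1"
    by (rule root_meets_uncovered_once[OF inner_disjoint
          disjoint_roots_norm[OF outer_disjoint \<open>j \<in> outer\<close>]])
qed

lemma uncovered_in_outer:
  "\<forall>l<N. (1 - cover inner (case_prod V) l) * (1 - cover outer (case_prod V) l) = 0"
  using uncovered_covered_by[OF inner_disjoint outer_disjoint outer_meets_uncovered_once]
  by (simp add: dim card_cartesian_product)

abbreviation M :: "nat \<times> nat \<Rightarrow> int" where
  "M i \<equiv> root_weight N w (case_prod V i)"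

lemma w_orthogonal:
  "\<forall>i\<in>inner. dot N w (case_prod V i) = 0" "\<forall>j\<in>outer. dot N w (case_prod V j) = 0"
  using gram nonempty gram_entries by auto

lemma w_norm: "(\<Sum>l<N. (w l)^2) = 4"
  using gram[of 0 0 4 4] nonempty gram_entries by (simp add: dot_self)

lemma weight_on_inner: "(\<Sum>l<N. (w l)^2 * cover inner (case_prod V) l) = 2 * (\<Sum>i\<in>inner. M i)"
proof -
  have "(\<Sum>l<N. 1 * (w l)^2 * cover inner (case_prod V) l)
      = (\<Sum>i\<in>inner. M i * (\<Sum>l<N. 1 * (case_prod V i l)^2))"
    by (rule weighted_sum_cover[OF inner_disjoint w_orthogonal(1)])
  also have "\<dots> = (\<Sum>i\<in>inner. 2 * M i)"
    using disjoint_roots_norm[OF inner_disjoint] by (intro sum.cong refl) (simp add: dot_self)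
  finally show ?thesis
    by (simp add: sum_distrib_left)
qed

text \<open>The coordinates missed by the inner roots are covered by the outer roots, each of which
  meets them exactly once; and \<open>V q 3\<close> shares a coordinate with \<open>V q 2\<close>.\<close>
lemma weight_off_inner:
  "(\<Sum>l<N. (w l)^2 * (1 - cover inner (case_prod V) l)) = (\<Sum>q<n. M (q, 2))"
proof -
  let ?\<kappa> = "cover inner (case_prod V)"
  have "(\<Sum>l<N. (w l)^2 * (1 - ?\<kappa> l))
      = (\<Sum>l<N. (1 - ?\<kappa> l) * (w l)^2 * cover outer (case_prod V) l)"
  proof (intro sum.cong refl)
    fix l assume "l \<in> {..<N}"
    then have "(1 - ?\<kappa> l) * (1 - cover outer (case_prod V) l) = 0"
      using uncovered_in_outer by blast
    then show "(w l)^2 * (1 - ?\<kappa> l) = (1 - ?\<kappa> l) * (w l)^2 * cover outer (case_prod V) l"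
      by algebra
  qed
  also have "\<dots> = (\<Sum>j\<in>outer. M j * (\<Sum>l<N. (1 - ?\<kappa> l) * (case_prod V j l)^2))"
    by (rule weighted_sum_cover[OF outer_disjoint w_orthogonal(2)])
  also have "\<dots> = (\<Sum>j\<in>outer. M j)"
    using outer_meets_uncovered_once by (intro sum.cong refl) (simp only: mult_1_right)
  also have "\<dots> = (\<Sum>q<n. M (q, 2))"
  proof -
    have "M (q, 3) = M (q, 2)" if "q < n" for q
      using root_weight_eq_if_overlap[of N "V q 3" w "V q 2"] gram[of q q] that
        gram_entries w_orthogonal disjoint_roots_norm[OF inner_disjoint]
        disjoint_roots_norm[OF outer_disjoint]
      by simp
    then show ?thesis
      unfolding sum_outer by simp
  qed
  finally show ?thesis .
qed

lemma inner_weight: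
  "(\<Sum>i\<in>inner. M i) = 2" "\<forall>l<N. (w l)^2 * (1 - cover inner (case_prod V) l) = 0"
proof -
  let ?\<kappa> = "cover inner (case_prod V)"
  have M_nonneg: "0 \<le> M i" if "i \<in> inner" for i
    using root_weight(2)[OF disjoint_roots_norm[OF inner_disjoint that]] w_orthogonal(1) that
    by blast
  have "(\<Sum>l<N. (w l)^2) = (\<Sum>l<N. (w l)^2 * ?\<kappa> l) + (\<Sum>l<N. (w l)^2 * (1 - ?\<kappa> l))"
    by (simp add: sum.distrib[symmetric] algebra_simps)
  then have norm: "4 = 2 * (\<Sum>i\<in>inner. M i) + (\<Sum>q<n. M (q, 2))"
    unfolding w_norm weight_on_inner weight_off_inner .
  have "0 \<le> (\<Sum>q<n. M (q, 2))" "(\<Sum>q<n. M (q, 2)) \<le> (\<Sum>i\<in>inner. M i)"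
    unfolding sum_inner using M_nonneg by (auto intro!: sum_nonneg sum_mono)
  with norm show "(\<Sum>i\<in>inner. M i) = 2" by linarith
  with norm have "(\<Sum>l<N. (w l)^2 * (1 - ?\<kappa> l)) = 0"
    unfolding weight_off_inner by simp
  moreover have "\<forall>l<N. 0 \<le> (w l)^2 * (1 - ?\<kappa> l)"
    using cover_le_1[OF inner_disjoint] by simp
  ultimately show "\<forall>l<N. (w l)^2 * (1 - ?\<kappa> l) = 0"
    by (rule nonneg_sum_lessThan_eq_0)
qed

text \<open>Pair \<open>w\<close> with the sum \<open>C\<close> of the central vertices: \<open>C \<cdot> w = -1\<close> is odd, but modulo 2 it
  equals \<open>\<Sum> C\<^sub>l\<^sup>2 w\<^sub>l\<^sup>2\<close>, which is congruent to the total inner weight \<open>2\<close>, since \<open>w\<close> lives on the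
  inner roots and each of them pairs oddly with \<open>C\<close>.\<close>
lemma inconsistent: False
proof -
  define C where "C l = (\<Sum>q<n. V q 0 l)" for l
  let ?\<kappa> = "cover inner (case_prod V)"
  define T where "T i = (\<Sum>l<N. (C l)^2 * (case_prod V i l)^2)" for i
  have Cw: "dot N C w = -1"
  proof -
    have "dot N C w = (\<Sum>q<n. dot N (V q 0) w)"
      unfolding C_def by (rule dot_sum_left)
    also have "\<dots> = (\<Sum>q<n. if q = 0 then -1 else 0)"
      using gram nonempty gram_entries by (intro sum.cong) auto
    finally show ?thesis
      using nonempty by simp
  qed
  have T_odd: "odd (T i)" if inner: "i \<in> inner" for i
  proof -
    obtain p v where i: "i = (p, v)" "p < n" "v \<in> {1, 2}" using inner by blast
    have "dot N C (V p v) = (\<Sum>q<n. dot N (V q 0) (V p v))"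
      unfolding C_def by (rule dot_sum_left)
    also have "\<dots> = (\<Sum>q<n. if q = p then -1 else 0)"
      using gram i gram_entries by (intro sum.cong) auto
    finally have "dot N C (V p v) = -1"
      using i by simp
    then show ?thesis
      using dot_parity[of N C "V p v"] i unfolding T_def by simp
  qed
  have "(\<Sum>l<N. (C l)^2 * (w l)^2) = (\<Sum>l<N. (C l)^2 * (w l)^2 * ?\<kappa> l)"
  proof (intro sum.cong refl)
    fix l assume "l \<in> {..<N}"
    then have "(w l)^2 * (1 - ?\<kappa> l) = 0" using inner_weight(2) by blast
    then show "(C l)^2 * (w l)^2 = (C l)^2 * (w l)^2 * ?\<kappa> l" by algebra
  qed
  also have "\<dots> = (\<Sum>i\<in>inner. M i * T i)"
    unfolding T_def by (rule weighted_sum_cover[OF inner_disjoint w_orthogonal(1)])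
  finally have CCww: "(\<Sum>l<N. (C l)^2 * (w l)^2) = (\<Sum>i\<in>inner. M i * T i)" .
  have "(\<Sum>i\<in>inner. M i * T i) - (\<Sum>i\<in>inner. M i) = (\<Sum>i\<in>inner. M i * (T i - 1))"
    by (simp add: sum_subtractf[symmetric] algebra_simps)
  also have "even \<dots>"
    using T_odd by (intro dvd_sum) auto
  finally have "even (\<Sum>l<N. (C l)^2 * (w l)^2)"
    unfolding CCww inner_weight(1) by simp
  then show False
    using dot_parity[of N C w] Cw by simp
qed

end

theorem mainTheorem11:
  fixes b k n :: nat
  assumes "b \<ge> 2" and "k \<in> {1, 5, 7}" and "n \<ge> 1"
  shows "\<not> embeds_in_std_neg (n * plumbing_rank b (O_invariants k))
            (orth_sum_copies n (plumbing_rank b (O_invariants k)) (plumbing_QX b (O_invariants k)))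
            (n * plumbing_rank b (O_invariants k))"
proof
  let ?r = "plumbing_rank b (O_invariants k)" and ?Q = "plumbing_QX b (O_invariants k)"
  assume "embeds_in_std_neg (n * ?r) (orth_sum_copies n ?r ?Q) (n * ?r)"
  then obtain V where V: "realizes_copies (n * ?r) n ?r (\<lambda>v v'. - ?Q v v') V"
    by (rule embedding_realizes_copies)
  from assms(2) consider "k = 1" | "k = 5" | "k = 7" by blast
  then show False
  proof cases
    case 1
    with V have "8 * n \<le> n * 7"
      using O1_realization_dim[of "n * 7" n b V] by (simp only: plumbing_O1(1))
    with assms(3) show False by linarith
  next
    case 2
    with V have "6 * n < n * 6"
      using O5_realization_dim[of "n * 6" n b V] assms(3) by (simp add: plumbing_O5(1))
    then show False by simp
  next
    case 3
    with V interpret O7_realization "n * 5" n b V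
      using assms(3) by unfold_locales (simp_all only: plumbing_O7(1))
    show False by (rule inconsistent)
  qed
qed

end
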